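(* Let $\mathbb{F}$ be a field of characteristic zero, $d\ge 2$, $n\ge 0$ an integer, and let $a_{k,j}\in\mathbb{F}$ ($2\le k\le n$, $2\le j\le d$) be arbitrary. Let $L_0,\dots,L_n\in\mathbb{F}[x_1,\dots,x_d]$ be defined recursively by $L_0=1$, $L_1=x_1$ and, for $2\le k\le n$, $$L_k=\Psi_1(M_1)+\Psi_2\big((M_2)_{i_1=0}\big)+\dots+\Psi_d\big((M_d)_{i_1=\dots=i_{d-1}=0}\big)+a_{k,2}x_2+\dots+a_{k,d}x_d,$$ where $M_1=L_{k-1}$ and $M_j=\sum_{t=2}^{k-1}a_{t,j}L_{k-t}$ for $2\le j\le d$. Define $$q^*_{n,m}=\sum \frac{a_{2,2}^{\gamma_{2,2}}\cdots a_{n,2}^{\gamma_{2,n}}\cdots a_{2,d}^{\gamma_{d,2}}\cdots a_{n,d}^{\gamma_{d,n}}}{\gamma_{1,1}!\,\gamma_{2,2}!\cdots\gamma_{2,n}!\cdots\gamma_{d,2}!\cdots\gamma_{d,n}!}\,x_1^{\gamma_{1,1}}\,x_2^{\gamma_{2,2}+\dots+\gamma_{2,n}}\cdots x_d^{\gamma_{d,2}+\dots+\gamma_{d,n}},$$ the sum running over all nonnegative integers $\gamma_{1,1}$ and $\gamma_{s,j}$ ($2\le s\le d$, $2\le j\le n$) with $$\gamma_{1,1}+2(\gamma_{2,2}+\dots+\gamma_{d,2})+\dots+n(\gamma_{2,n}+\dots+\gamma_{d,n})=m.$$ Then $q^*_{n,m}=L_m$ for all $m=0,1,\dots,n$.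
   Context: $\Psi_j$ is the $\mathbb{F}$-linear operator on $\mathbb{F}[x_1,\dots,x_d]$ given on monomials by $\Psi_j(x_1^{\alpha_1}\cdots x_d^{\alpha_d})=\frac{1}{\alpha_j+1}x_1^{\alpha_1}\cdots x_j^{\alpha_j+1}\cdots x_d^{\alpha_d}$. For a polynomial $M$, $(M)_{i_1=\dots=i_{j-1}=0}$ denotes the polynomial consisting of those terms of $M$ that contain none of the variables $x_1,\dots,x_{j-1}$. The convention $0^0=1$ is used. ($q^*_{n,m}$ is the specialization of the polynomial $q_{n,m}=\sum_{\tau=m}\frac{\mathbf c_1^{\pmb\gamma_1}\cdots\mathbf c_d^{\pmb\gamma_d}}{\pmb\gamma_1!\cdots\pmb\gamma_d!}x_1^{|\pmb\gamma_1|}\cdots x_d^{|\pmb\gamma_d|}$, $\tau=\sum_j b_j\sum_i\gamma_{i,j}$, to $\mathbf b=(1,2,\dots,n)$, $\mathbf c_1=(1,0,\dots,0)$, $\mathbf c_s=(0,a_{2,s},\dots,a_{n,s})$.) *)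

theory Defs
  imports Main "HOL-Library.Poly_Mapping"
begin

text \<open>A polynomial in F[x_1,...,x_d] is represented by its coefficient function:
  exponent vectors are finitely supported maps nat =>0 nat (variable x_i has index i).\<close>

type_synonym 'a cpoly = "(nat \<Rightarrow>\<^sub>0 nat) \<Rightarrow> 'a"

definition pconst :: "'a::zero \<Rightarrow> 'a cpoly" where
  "pconst c = (\<lambda>\<alpha>. if \<alpha> = 0 then c else 0)"

definition pvar :: "nat \<Rightarrow> 'a::{zero,one} cpoly" where
  "pvar i = (\<lambda>\<alpha>. if \<alpha> = Poly_Mapping.single i 1 then 1 else 0)"

text \<open>Psi_j (x^alpha) = x^(alpha + e_j) / (alpha_j + 1), extended linearly.\<close>
definition Psi :: "nat \<Rightarrow> 'a::field cpoly \<Rightarrow> 'a cpoly" where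
  "Psi j M = (\<lambda>\<beta>. if 0 < Poly_Mapping.lookup \<beta> j
                    then M (\<beta> - Poly_Mapping.single j 1) / of_nat (Poly_Mapping.lookup \<beta> j) else 0)"

text \<open>(M)_{i_1=...=i_{j-1}=0}: the terms of M containing none of x_1,...,x_{j-1}.\<close>
definition restr :: "nat \<Rightarrow> 'a::zero cpoly \<Rightarrow> 'a cpoly" where
  "restr j M = (\<lambda>\<alpha>. if (\<forall>i\<in>{1..<j}. Poly_Mapping.lookup \<alpha> i = 0) then M \<alpha> else 0)"

text \<open>The polynomial M_j in step k, given the list Ls = [L_0,...,L_{k-1}].\<close>
definition Mpoly :: "(nat \<Rightarrow> nat \<Rightarrow> 'a::field) \<Rightarrow> nat \<Rightarrow> nat \<Rightarrow> 'a cpoly list \<Rightarrow> 'a cpoly" where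
  "Mpoly a k j Ls = (if j = 1 then Ls ! (k - 1)
      else (\<lambda>\<alpha>. \<Sum>t\<in>{2..k-1}. a t j * (Ls ! (k - t)) \<alpha>))"

definition Lstep :: "(nat \<Rightarrow> nat \<Rightarrow> 'a::field) \<Rightarrow> nat \<Rightarrow> nat \<Rightarrow> 'a cpoly list \<Rightarrow> 'a cpoly" where
  "Lstep a d k Ls = (\<lambda>\<alpha>. (\<Sum>j\<in>{1..d}. Psi j (restr j (Mpoly a k j Ls)) \<alpha>)
                        + (\<Sum>j\<in>{2..d}. a k j * pvar j \<alpha>))"

primrec Lseq :: "(nat \<Rightarrow> nat \<Rightarrow> 'a::field) \<Rightarrow> nat \<Rightarrow> nat \<Rightarrow> 'a cpoly list" where
  "Lseq a d 0 = [pconst 1]"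
| "Lseq a d (Suc k) = Lseq a d k @
     [if k = 0 then pvar 1 else Lstep a d (Suc k) (Lseq a d k)]"

definition Lpoly :: "(nat \<Rightarrow> nat \<Rightarrow> 'a::field) \<Rightarrow> nat \<Rightarrow> nat \<Rightarrow> 'a cpoly" where
  "Lpoly a d k = Lseq a d k ! k"

text \<open>Index set of the sum defining q*_{n,m}: pairs (g11, g) with g s j = gamma_{s,j}
  for 2 <= s <= d, 2 <= j <= n (and g = 0 elsewhere).\<close>
definition Gset :: "nat \<Rightarrow> nat \<Rightarrow> nat \<Rightarrow> (nat \<times> (nat \<Rightarrow> nat \<Rightarrow> nat)) set" where
  "Gset d n m = {(g1, g). g1 + (\<Sum>j\<in>{2..n}. j * (\<Sum>s\<in>{2..d}. g s j)) = m
                   \<and> (\<forall>s j. (s \<notin> {2..d} \<or> j \<notin> {2..n}) \<longrightarrow> g s j = 0)}"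

definition qcoef :: "(nat \<Rightarrow> nat \<Rightarrow> 'a::field) \<Rightarrow> nat \<Rightarrow> nat \<Rightarrow> nat \<times> (nat \<Rightarrow> nat \<Rightarrow> nat) \<Rightarrow> 'a" where
  "qcoef a d n \<gamma> = (case \<gamma> of (g1, g) \<Rightarrow>
     (\<Prod>s\<in>{2..d}. \<Prod>j\<in>{2..n}. a j s ^ g s j)
     / of_nat (fact g1 * (\<Prod>s\<in>{2..d}. \<Prod>j\<in>{2..n}. fact (g s j))))"

definition qexp :: "nat \<Rightarrow> nat \<Rightarrow> nat \<times> (nat \<Rightarrow> nat \<Rightarrow> nat) \<Rightarrow> (nat \<Rightarrow>\<^sub>0 nat)" where
  "qexp d n \<gamma> = (case \<gamma> of (g1, g) \<Rightarrow>
     Poly_Mapping.single 1 g1 + (\<Sum>s\<in>{2..d}. Poly_Mapping.single s (\<Sum>j\<in>{2..n}. g s j)))"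

definition qstar :: "(nat \<Rightarrow> nat \<Rightarrow> 'a::field) \<Rightarrow> nat \<Rightarrow> nat \<Rightarrow> nat \<Rightarrow> 'a cpoly" where
  "qstar a d n m = (\<lambda>\<alpha>. \<Sum>\<gamma>\<in>{\<gamma> \<in> Gset d n m. qexp d n \<gamma> = \<alpha>}. qcoef a d n \<gamma>)"

end

theory Submission
  imports Defs
begin

text \<open>Writing \<open>\<partial>\<^sub>j\<close> for the formal partial derivative, the generating sum defining \<open>q\<^sup>*\<^sub>m\<close> satisfies
  \<open>\<partial>\<^sub>1 q\<^sup>*\<^sub>m = q\<^sup>*\<^sub>m\<^sub>-\<^sub>1\<close> and \<open>\<partial>\<^sub>s q\<^sup>*\<^sub>m = (\<Sum>t=2..m. a\<^sub>t\<^sub>,\<^sub>s q\<^sup>*\<^sub>m\<^sub>-\<^sub>t)\<close> for \<open>s \<ge> 2\<close>: differentiating a summand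
  lowers one exponent \<open>\<gamma>\<close> together with its factorial, and the weight drops by \<open>1\<close> resp. \<open>t\<close>.
  At a monomial \<open>x\<^sup>\<beta>\<close> whose first occurring variable is \<open>x\<^sub>j\<close>, only the summand
  \<open>\<Psi>\<^sub>j((M\<^sub>j)\<^sub>i\<^sub>1\<^sub>=\<^sub>\<dots>\<^sub>=\<^sub>i\<^sub>j\<^sub>-\<^sub>1\<^sub>=\<^sub>0)\<close> of the recursion for \<open>L\<^sub>m\<close> contributes, and it returns exactly the
  coefficient prescribed by the derivative identity for \<open>x\<^sub>j\<close>.\<close>

lemma lookup_minus_single:
  "Poly_Mapping.lookup (\<beta> - Poly_Mapping.single j v) i
     = Poly_Mapping.lookup \<beta> i - (if i = j then v else (0::nat))"
  by (simp add: lookup_minus lookup_single when_def)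

lemma eq_minus_single_iff:
  assumes "0 < Poly_Mapping.lookup \<beta> j"
  shows "p = \<beta> - Poly_Mapping.single j 1 \<longleftrightarrow> p + Poly_Mapping.single j (1::nat) = \<beta>"
proof
  assume "p = \<beta> - Poly_Mapping.single j 1"
  then show "p + Poly_Mapping.single j 1 = \<beta>"
    using assms by (intro poly_mapping_eqI) (auto simp: lookup_add lookup_minus_single lookup_single)
qed auto

lemma pconst_one_minus_single:
  assumes "0 < Poly_Mapping.lookup \<beta> j"
  shows "pconst 1 (\<beta> - Poly_Mapping.single j 1) = pvar j \<beta>"
  using eq_minus_single_iff[OF assms, of 0] by (auto simp: pconst_def pvar_def)

lemma sum_pvar_at:
  fixes c :: "nat \<Rightarrow> 'a::{semiring_0,one}"
  assumes "finite J" and "0 < Poly_Mapping.lookup \<beta> j0"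
  shows "(\<Sum>j\<in>J. c j * pvar j \<beta>) = (if j0 \<in> J then c j0 * pvar j0 \<beta> else 0)"
proof -
  have "pvar j \<beta> = (0::'a)" if "j \<noteq> j0" for j
    using assms(2) that by (auto simp: pvar_def lookup_single)
  then have "(\<Sum>j\<in>J. c j * pvar j \<beta>) = (\<Sum>j\<in>J. if j = j0 then c j0 * pvar j0 \<beta> else 0)"
    by (intro sum.cong) auto
  then show ?thesis using assms(1) by simp
qed

lemma Psi_restr_eq_0:
  "M (\<beta> - Poly_Mapping.single j 1) = 0 \<Longrightarrow> Psi j (restr j M) \<beta> = 0"
  by (simp add: Psi_def restr_def)

lemma sum_Psi_restr_least_var:
  fixes M :: "nat \<Rightarrow> 'a::field cpoly"
  assumes j0: "j0 \<in> {1..d}" "0 < Poly_Mapping.lookup \<beta> j0"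
    and below: "\<And>i. i < j0 \<Longrightarrow> Poly_Mapping.lookup \<beta> i = 0"
  shows "(\<Sum>j\<in>{1..d}. Psi j (restr j (M j)) \<beta>)
       = M j0 (\<beta> - Poly_Mapping.single j0 1) / of_nat (Poly_Mapping.lookup \<beta> j0)"
proof -
  have "Psi j (restr j (M j)) \<beta> = 0" if "j \<in> {1..d} - {j0}" for j
  proof (cases "j < j0")
    case True
    then show ?thesis by (simp add: Psi_def below)
  next
    case False
    text \<open>The variable \<open>x\<^sub>j\<^sub>0\<close> survives in \<open>\<beta> - e\<^sub>j\<close>, so the restriction kills the term.\<close>
    then have "j0 \<in> {1..<j}" "Poly_Mapping.lookup (\<beta> - Poly_Mapping.single j 1) j0 > 0"
      using that j0 by (auto simp: lookup_minus_single)
    then show ?thesis by (auto simp: Psi_def restr_def)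
  qed
  then have "(\<Sum>j\<in>{1..d}. Psi j (restr j (M j)) \<beta>) = Psi j0 (restr j0 (M j0)) \<beta>"
    using j0(1) by (simp add: sum.remove[of _ j0] sum.neutral)
  also have "\<dots> = M j0 (\<beta> - Poly_Mapping.single j0 1) / of_nat (Poly_Mapping.lookup \<beta> j0)"
    using j0(2) by (simp add: Psi_def restr_def lookup_minus_single below)
  finally show ?thesis .
qed

definition qweight :: "nat \<Rightarrow> nat \<Rightarrow> nat \<Rightarrow> (nat \<Rightarrow> nat \<Rightarrow> nat) \<Rightarrow> nat" where
  "qweight d n g1 g = g1 + (\<Sum>j\<in>{2..n}. j * (\<Sum>s\<in>{2..d}. g s j))"

lemma mem_Gset_iff:
  "(g1, g) \<in> Gset d n m \<longleftrightarrow>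
     qweight d n g1 g = m \<and> (\<forall>s j. s \<notin> {2..d} \<or> j \<notin> {2..n} \<longrightarrow> g s j = 0)"
  by (simp add: Gset_def qweight_def)

lemma qweight_ge:
  assumes "s \<in> {2..d}" "t \<in> {2..n}"
  shows "g1 + t * g s t \<le> qweight d n g1 g"
proof -
  have "t * g s t \<le> t * (\<Sum>s\<in>{2..d}. g s t)"
    using assms by (intro mult_le_mono2 member_le_sum) auto
  also have "\<dots> \<le> (\<Sum>j\<in>{2..n}. j * (\<Sum>s\<in>{2..d}. g s j))"
    using assms(2) by (intro member_le_sum[where f = "\<lambda>j. j * (\<Sum>s\<in>{2..d}. g s j)"]) auto
  finally show ?thesis by (simp add: qweight_def)
qed

lemma finite_Gset: "finite (Gset d n m)"
proof -
  let ?A = "{2..d} \<times> {2..n}"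
  let ?F = "{f :: nat \<times> nat \<Rightarrow> nat. \<forall>x. (x \<in> ?A \<longrightarrow> f x \<in> {0..m}) \<and> (x \<notin> ?A \<longrightarrow> f x = 0)}"
  have "(g1, g) \<in> {0..m} \<times> curry ` ?F" if G: "(g1, g) \<in> Gset d n m" for g1 g
  proof -
    have "g s t \<le> m" if "s \<in> {2..d}" "t \<in> {2..n}" for s t
    proof -
      have "g s t \<le> t * g s t" using that by simp
      moreover have "g1 + t * g s t \<le> m" using qweight_ge[OF that, of g1 g] G by (simp add: mem_Gset_iff)
      ultimately show ?thesis by linarith
    qed
    then have "case_prod g \<in> ?F" using G by (auto simp: mem_Gset_iff)
    moreover have "g1 \<le> m" using G by (simp add: mem_Gset_iff qweight_def)
    ultimately show ?thesis by (auto intro: image_eqI[of g curry "case_prod g"])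
  qed
  then have "Gset d n m \<subseteq> {0..m} \<times> curry ` ?F" by auto
  moreover have "finite ?F" by (rule finite_set_of_finite_funs) auto
  ultimately show ?thesis by (auto dest: finite_subset)
qed

lemma Gset_le_1:
  assumes "m \<le> 1"
  shows "Gset d n m = {(m, \<lambda>_ _. 0)}"
proof -
  have zero: "g = (\<lambda>_ _. 0)" if G: "(g1, g) \<in> Gset d n m" for g1 g
  proof (intro ext)
    fix s t
    show "g s t = 0"
    proof (cases "s \<in> {2..d} \<and> t \<in> {2..n}")
      case True
      then have "t * g s t \<le> 1" using qweight_ge[of s d t n g1 g] G assms by (simp add: mem_Gset_iff)
      then show ?thesis using True by (cases "g s t") auto
    qed (use G in \<open>auto simp: mem_Gset_iff\<close>)
  qed
  have "(g1, g) \<in> Gset d n m \<longleftrightarrow> (g1, g) = (m, \<lambda>_ _. 0)" for g1 g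
  proof
    assume G: "(g1, g) \<in> Gset d n m"
    then have "g = (\<lambda>_ _. 0)" by (rule zero)
    with G show "(g1, g) = (m, \<lambda>_ _. 0)" by (simp add: mem_Gset_iff qweight_def)
  qed (simp add: mem_Gset_iff qweight_def)
  then show ?thesis by auto
qed

lemma lookup_qexp:
  "Poly_Mapping.lookup (qexp d n (g1, g)) i =
     (if i = 1 then g1 else if i \<in> {2..d} then \<Sum>j\<in>{2..n}. g i j else 0)"
  by (auto simp: qexp_def lookup_add lookup_sum lookup_single when_def)

lemma qexp_Suc_first: "qexp d n (Suc g1, g) = qexp d n (g1, g) + Poly_Mapping.single 1 1"
  by (rule poly_mapping_eqI) (simp add: lookup_qexp lookup_add lookup_single)

lemma Suc_first_mem_Gset_iff:
  "(Suc g1, g) \<in> Gset d n m \<longleftrightarrow> 1 \<le> m \<and> (g1, g) \<in> Gset d n (m - 1)"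
  by (auto simp: mem_Gset_iff qweight_def)

definition bump :: "nat \<Rightarrow> nat \<Rightarrow> (nat \<Rightarrow> nat \<Rightarrow> nat) \<Rightarrow> nat \<Rightarrow> nat \<Rightarrow> nat" where
  "bump s t g = g(s := (g s)(t := Suc (g s t)))"

definition unbump :: "nat \<Rightarrow> nat \<Rightarrow> (nat \<Rightarrow> nat \<Rightarrow> nat) \<Rightarrow> nat \<Rightarrow> nat \<Rightarrow> nat" where
  "unbump s t g = g(s := (g s)(t := g s t - 1))"

lemma unbump_bump [simp]: "unbump s t (bump s t g) = g"
  by (auto simp: bump_def unbump_def)

lemma bump_unbump: "0 < g s t \<Longrightarrow> bump s t (unbump s t g) = g"
  by (auto simp: bump_def unbump_def)

lemma bump_same [simp]: "bump s t g s t = Suc (g s t)"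
  by (simp add: bump_def)

lemma bump_apply: "bump s t g s' t' = g s' t' + (if s' = s \<and> t' = t then 1 else 0)"
  by (simp add: bump_def)

lemma qweight_bump:
  assumes "s \<in> {2..d}" "t \<in> {2..n}"
  shows "qweight d n g1 (bump s t g) = qweight d n g1 g + t"
proof -
  have *: "(\<Sum>s'\<in>{2..d}. bump s t g s' j) = (\<Sum>s'\<in>{2..d}. g s' j) + (if j = t then 1 else 0)" for j
    using assms(1) by (simp add: bump_apply sum.distrib)
  have "(\<Sum>j\<in>{2..n}. j * (\<Sum>s'\<in>{2..d}. bump s t g s' j))
      = (\<Sum>j\<in>{2..n}. j * (\<Sum>s'\<in>{2..d}. g s' j) + (if j = t then t else 0))"
    by (intro sum.cong) (simp_all add: * distrib_left)
  also have "\<dots> = (\<Sum>j\<in>{2..n}. j * (\<Sum>s'\<in>{2..d}. g s' j)) + t"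
    using assms(2) by (simp add: sum.distrib)
  finally show ?thesis by (simp add: qweight_def)
qed

lemma bump_mem_Gset_iff:
  assumes "s \<in> {2..d}" "t \<in> {2..n}"
  shows "(g1, bump s t g) \<in> Gset d n m \<longleftrightarrow> t \<le> m \<and> (g1, g) \<in> Gset d n (m - t)"
proof -
  have "(\<forall>s' j. s' \<notin> {2..d} \<or> j \<notin> {2..n} \<longrightarrow> bump s t g s' j = 0)
    \<longleftrightarrow> (\<forall>s' j. s' \<notin> {2..d} \<or> j \<notin> {2..n} \<longrightarrow> g s' j = 0)"
    using assms by (auto simp: bump_apply)
  then show ?thesis using qweight_bump[OF assms] by (auto simp: mem_Gset_iff)
qed

lemma qexp_bump:
  assumes "s \<in> {2..d}" "t \<in> {2..n}"
  shows "qexp d n (g1, bump s t g) = qexp d n (g1, g) + Poly_Mapping.single s 1"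
proof (rule poly_mapping_eqI)
  fix i
  have "(\<Sum>j\<in>{2..n}. bump s t g i j) = (\<Sum>j\<in>{2..n}. g i j) + (if i = s then 1 else 0)"
    using assms(2) by (simp add: bump_apply sum.distrib)
  then show "Poly_Mapping.lookup (qexp d n (g1, bump s t g)) i
      = Poly_Mapping.lookup (qexp d n (g1, g) + Poly_Mapping.single s 1) i"
    using assms(1) by (auto simp: lookup_qexp lookup_add lookup_single)
qed

lemma prod_prod_fun_upd_factor:
  fixes F :: "'i \<Rightarrow> 'j \<Rightarrow> 'v \<Rightarrow> 'b::comm_monoid_mult"
  assumes "finite A" "finite B" "s \<in> A" "t \<in> B"
  obtains R where "(\<Prod>x\<in>A. \<Prod>y\<in>B. F x y ((g(s := (g s)(t := v))) x y)) = F s t v * R"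
    and "(\<Prod>x\<in>A. \<Prod>y\<in>B. F x y (g x y)) = F s t (g s t) * R"
proof -
  have split: "(\<Prod>x\<in>A. \<Prod>y\<in>B. F x y (h x y))
      = F s t (h s t) * (\<Prod>p\<in>A \<times> B - {(s, t)}. F (fst p) (snd p) (h (fst p) (snd p)))" for h
  proof -
    have "(\<Prod>x\<in>A. \<Prod>y\<in>B. F x y (h x y)) = (\<Prod>p\<in>A \<times> B. F (fst p) (snd p) (h (fst p) (snd p)))"
      by (simp add: prod.cartesian_product case_prod_beta)
    also have "\<dots> = F s t (h s t) * (\<Prod>p\<in>A \<times> B - {(s, t)}. F (fst p) (snd p) (h (fst p) (snd p)))"
      using assms by (subst prod.remove[of _ "(s, t)"]) auto
    finally show ?thesis .
  qed
  have "(\<Prod>p\<in>A \<times> B - {(s, t)}. F (fst p) (snd p) ((g(s := (g s)(t := v))) (fst p) (snd p)))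
      = (\<Prod>p\<in>A \<times> B - {(s, t)}. F (fst p) (snd p) (g (fst p) (snd p)))"
    by (rule prod.cong) auto
  then show ?thesis using that split[of g] split[of "g(s := (g s)(t := v))"] by simp
qed

lemma qcoef_Suc_first:
  "of_nat (Suc g1) * qcoef a d n (Suc g1, g) = (qcoef a d n (g1, g) :: 'a::field_char_0)"
proof -
  let ?P = "\<Prod>s\<in>{2..d}. \<Prod>j\<in>{2..n}. a j s ^ g s j"
  let ?F = "(\<Prod>s\<in>{2..d}. \<Prod>j\<in>{2..n}. fact (g s j)) :: nat"
  have "qcoef a d n (Suc g1, g) = ?P / (of_nat (Suc g1) * of_nat (fact g1 * ?F))"
    by (simp add: qcoef_def fact_Suc mult.assoc del: of_nat_prod)
  moreover have "qcoef a d n (g1, g) = ?P / of_nat (fact g1 * ?F)"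
    by (simp add: qcoef_def)
  ultimately show ?thesis by (simp del: of_nat_Suc)
qed

lemma qcoef_bump:
  fixes a :: "nat \<Rightarrow> nat \<Rightarrow> 'a::field_char_0"
  assumes "s \<in> {2..d}" "t \<in> {2..n}"
  shows "of_nat (Suc (g s t)) * qcoef a d n (g1, bump s t g) = a t s * qcoef a d n (g1, g)"
proof -
  let ?c = "g s t"
  obtain R1 where R1: "(\<Prod>x\<in>{2..d}. \<Prod>y\<in>{2..n}. a y x ^ bump s t g x y) = a t s ^ Suc ?c * R1"
      "(\<Prod>x\<in>{2..d}. \<Prod>y\<in>{2..n}. a y x ^ g x y) = a t s ^ ?c * R1"
    using prod_prod_fun_upd_factor[of "{2..d}" "{2..n}" s t "\<lambda>x y v. a y x ^ v" g "Suc ?c"] assms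
    unfolding bump_def by auto
  obtain R2 where R2: "(\<Prod>x\<in>{2..d}. \<Prod>y\<in>{2..n}. fact (bump s t g x y)) = (fact (Suc ?c) :: nat) * R2"
      "(\<Prod>x\<in>{2..d}. \<Prod>y\<in>{2..n}. fact (g x y)) = (fact ?c :: nat) * R2"
    using prod_prod_fun_upd_factor[of "{2..d}" "{2..n}" s t "\<lambda>x y v. fact v :: nat" g "Suc ?c"] assms
    unfolding bump_def by auto
  have "fact g1 * (fact (Suc ?c) * R2) = Suc ?c * (fact g1 * (fact ?c * R2))"
    by (simp only: fact_Suc of_nat_id mult.assoc mult.left_commute)
  then have "qcoef a d n (g1, bump s t g)
      = (a t s * (a t s ^ ?c * R1)) / (of_nat (Suc ?c) * of_nat (fact g1 * (fact ?c * R2)))"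
    unfolding qcoef_def prod.case R1(1) R2(1) of_nat_mult[of "Suc ?c", symmetric] by simp
  moreover have "qcoef a d n (g1, g) = (a t s ^ ?c * R1) / of_nat (fact g1 * (fact ?c * R2))"
    by (simp add: qcoef_def R1(2) R2(2) del: of_nat_prod)
  ultimately show ?thesis by (simp del: of_nat_Suc)
qed

lemma qstar_partial_first:
  fixes a :: "nat \<Rightarrow> nat \<Rightarrow> 'a::field_char_0"
  assumes "1 \<le> m" and \<beta>: "0 < Poly_Mapping.lookup \<beta> 1"
  shows "of_nat (Poly_Mapping.lookup \<beta> 1) * qstar a d n m \<beta>
       = qstar a d n (m - 1) (\<beta> - Poly_Mapping.single 1 1)"
proof -
  let ?S = "\<lambda>k \<alpha>. {\<gamma> \<in> Gset d n k. qexp d n \<gamma> = \<alpha>}"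
  let ?inc = "\<lambda>(g1, g). (Suc g1, g)"
  have shift: "(Suc g1, g) \<in> ?S m \<beta> \<longleftrightarrow> (g1, g) \<in> ?S (m - 1) (\<beta> - Poly_Mapping.single 1 1)" for g1 g
    using eq_minus_single_iff[OF \<beta>, of "qexp d n (g1, g)"] assms
    by (auto simp: Suc_first_mem_Gset_iff qexp_Suc_first)
  have first: "g1 = Poly_Mapping.lookup \<beta> 1" if "(g1, g) \<in> ?S k \<beta>" for g1 g k
    using that lookup_qexp[of d n g1 g 1] by simp
  have img: "?S m \<beta> = ?inc ` ?S (m - 1) (\<beta> - Poly_Mapping.single 1 1)"
  proof (intro equalityI subsetI)
    fix \<gamma> assume \<gamma>: "\<gamma> \<in> ?S m \<beta>"
    obtain g1' g where \<gamma>': "\<gamma> = (g1', g)" by (cases \<gamma>)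
    then have "0 < g1'" using first[of g1' g m] \<gamma> \<beta> by simp
    then obtain g1 where "\<gamma> = (Suc g1, g)" using \<gamma>' gr0_conv_Suc by auto
    with \<gamma> show "\<gamma> \<in> ?inc ` ?S (m - 1) (\<beta> - Poly_Mapping.single 1 1)"
      using shift by (auto intro: image_eqI)
  qed (use shift in auto)
  have inj: "inj_on ?inc A" for A by (auto simp: inj_on_def)
  have "qstar a d n m \<beta> = (\<Sum>\<gamma>\<in>?S (m - 1) (\<beta> - Poly_Mapping.single 1 1). qcoef a d n (?inc \<gamma>))"
    unfolding qstar_def by (rule sum.reindex_cong[OF inj img refl])
  also have "of_nat (Poly_Mapping.lookup \<beta> 1) * \<dots> = qstar a d n (m - 1) (\<beta> - Poly_Mapping.single 1 1)"
    unfolding qstar_def sum_distrib_left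
  proof (intro sum.cong refl)
    fix \<gamma> assume \<gamma>: "\<gamma> \<in> ?S (m - 1) (\<beta> - Poly_Mapping.single 1 1)"
    obtain g1 g where \<gamma>': "\<gamma> = (g1, g)" by (cases \<gamma>)
    with \<gamma> have "(Suc g1, g) \<in> ?S m \<beta>" using shift by blast
    then have "Poly_Mapping.lookup \<beta> 1 = Suc g1" by (rule first[symmetric])
    then show "of_nat (Poly_Mapping.lookup \<beta> 1) * qcoef a d n (?inc \<gamma>) = qcoef a d n \<gamma>"
      using \<gamma>' qcoef_Suc_first by simp
  qed
  finally show ?thesis by simp
qed

lemma sum_fibre_count_mult_qcoef:
  fixes a :: "nat \<Rightarrow> nat \<Rightarrow> 'a::field_char_0"
  assumes s: "s \<in> {2..d}" and t: "t \<in> {2..n}" "t \<le> m" and \<beta>: "0 < Poly_Mapping.lookup \<beta> s"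
  shows "(\<Sum>\<gamma>\<in>{\<gamma> \<in> Gset d n m. qexp d n \<gamma> = \<beta>}. of_nat (snd \<gamma> s t) * qcoef a d n \<gamma>)
       = a t s * qstar a d n (m - t) (\<beta> - Poly_Mapping.single s 1)"
proof -
  let ?S = "\<lambda>k \<alpha>. {\<gamma> \<in> Gset d n k. qexp d n \<gamma> = \<alpha>}"
  let ?T = "{\<gamma> \<in> ?S m \<beta>. 0 < snd \<gamma> s t}"
  let ?S' = "?S (m - t) (\<beta> - Poly_Mapping.single s 1)"
  let ?inc = "\<lambda>(g1, g). (g1, bump s t g)"
  have shift: "(g1, bump s t g) \<in> ?S m \<beta> \<longleftrightarrow> (g1, g) \<in> ?S'" for g1 g
    using eq_minus_single_iff[OF \<beta>, of "qexp d n (g1, g)"] assms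
    by (auto simp: bump_mem_Gset_iff qexp_bump)
  have img: "?T = ?inc ` ?S'"
  proof (intro equalityI subsetI)
    fix \<gamma> assume \<gamma>: "\<gamma> \<in> ?T"
    obtain g1 g where \<gamma>': "\<gamma> = (g1, g)" by (cases \<gamma>)
    with \<gamma> have "\<gamma> = ?inc (g1, unbump s t g)" and "(g1, unbump s t g) \<in> ?S'"
      using shift[of g1 "unbump s t g"] by (simp_all add: bump_unbump)
    then show "\<gamma> \<in> ?inc ` ?S'" by blast
  qed (use shift in \<open>auto simp: bump_def\<close>)
  have inj: "inj_on ?inc A" for A
    by (auto simp: inj_on_def) (metis unbump_bump)
  have "(\<Sum>\<gamma>\<in>?S m \<beta>. of_nat (snd \<gamma> s t) * qcoef a d n \<gamma>) = (\<Sum>\<gamma>\<in>?T. of_nat (snd \<gamma> s t) * qcoef a d n \<gamma>)"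
    by (rule sum.mono_neutral_right) (auto simp: finite_Gset)
  also have "\<dots> = (\<Sum>\<gamma>\<in>?S'. of_nat (snd (?inc \<gamma>) s t) * qcoef a d n (?inc \<gamma>))"
    by (rule sum.reindex_cong[OF inj img refl])
  also have "\<dots> = (\<Sum>\<gamma>\<in>?S'. a t s * qcoef a d n \<gamma>)"
    by (intro sum.cong refl) (auto simp: qcoef_bump[OF s t(1)] simp del: of_nat_Suc)
  finally show ?thesis by (simp add: qstar_def sum_distrib_left)
qed

lemma qstar_partial:
  fixes a :: "nat \<Rightarrow> nat \<Rightarrow> 'a::field_char_0"
  assumes s: "s \<in> {2..d}" and \<beta>: "0 < Poly_Mapping.lookup \<beta> s" and "m \<le> n"
  shows "of_nat (Poly_Mapping.lookup \<beta> s) * qstar a d n m \<beta>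
       = (\<Sum>t\<in>{2..m}. a t s * qstar a d n (m - t) (\<beta> - Poly_Mapping.single s 1))"
proof -
  let ?S = "{\<gamma> \<in> Gset d n m. qexp d n \<gamma> = \<beta>}"
  let ?f = "\<lambda>t. \<Sum>\<gamma>\<in>?S. of_nat (snd \<gamma> s t) * qcoef a d n \<gamma>"
  have count: "Poly_Mapping.lookup \<beta> s = (\<Sum>t\<in>{2..n}. snd \<gamma> s t)" if "\<gamma> \<in> ?S" for \<gamma>
    using that s by (cases \<gamma>) (auto simp: lookup_qexp)
  have "of_nat (Poly_Mapping.lookup \<beta> s) * qstar a d n m \<beta>
      = (\<Sum>\<gamma>\<in>?S. \<Sum>t\<in>{2..n}. of_nat (snd \<gamma> s t) * qcoef a d n \<gamma>)"
    unfolding qstar_def sum_distrib_left by (intro sum.cong refl) (simp add: count sum_distrib_right)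
  also have "\<dots> = (\<Sum>t\<in>{2..n}. ?f t)" by (rule sum.swap)
  also have "\<dots> = (\<Sum>t\<in>{2..m}. ?f t)"
  proof (rule sum.mono_neutral_right)
    show "\<forall>t\<in>{2..n} - {2..m}. ?f t = 0"
    proof
      fix t assume t: "t \<in> {2..n} - {2..m}"
      text \<open>An exponent \<open>\<gamma>\<^sub>s\<^sub>,\<^sub>t\<close> with \<open>t > m\<close> alone would exceed the weight \<open>m\<close>.\<close>
      have "snd \<gamma> s t = 0" if "\<gamma> \<in> ?S" for \<gamma>
        using that t qweight_ge[OF s, of t n "fst \<gamma>" "snd \<gamma>"]
        by (cases \<gamma>; cases "snd \<gamma> s t") (auto simp: mem_Gset_iff)
      then show "?f t = 0" by simp
    qed
  qed (use assms in auto)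
  also have "\<dots> = (\<Sum>t\<in>{2..m}. a t s * qstar a d n (m - t) (\<beta> - Poly_Mapping.single s 1))"
    using assms by (intro sum.cong refl sum_fibre_count_mult_qcoef) auto
  finally show ?thesis .
qed

lemma qstar_le_1:
  assumes "m \<le> 1"
  shows "qstar a d n m = (\<lambda>\<beta>. if \<beta> = Poly_Mapping.single 1 m then 1 else 0)"
proof -
  have fibre: "{\<gamma> \<in> Gset d n m. qexp d n \<gamma> = \<beta>}
      = (if \<beta> = Poly_Mapping.single 1 m then {(m, \<lambda>_ _. 0)} else {})" for \<beta>
    by (auto simp: Gset_le_1[OF assms] qexp_def)
  have "qcoef a d n (m, \<lambda>_ _. 0) = 1" using assms by (cases m) (auto simp: qcoef_def)
  then show ?thesis by (simp add: qstar_def fun_eq_iff fibre)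
qed

lemma qstar_0: "qstar a d n 0 = pconst 1"
  by (simp add: qstar_le_1 pconst_def)

lemma qstar_1: "qstar a d n 1 = pvar 1"
  by (simp add: qstar_le_1 pvar_def)

lemma qstar_eq_0_outside_vars:
  assumes "0 < Poly_Mapping.lookup \<beta> i" "i \<notin> {1..d}" "1 \<le> d"
  shows "qstar a d n m \<beta> = 0"
proof -
  have "qexp d n \<gamma> \<noteq> \<beta>" for \<gamma>
    using assms by (cases \<gamma>) (auto simp: lookup_qexp dest: arg_cong[of _ _ "\<lambda>p. Poly_Mapping.lookup p i"])
  then show ?thesis by (simp add: qstar_def)
qed

lemma qstar_at_0:
  assumes "1 \<le> m"
  shows "qstar a d n m 0 = 0"
proof -
  have "qexp d n (g1, g) \<noteq> 0" if "(g1, g) \<in> Gset d n m" for g1 g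
  proof
    assume "qexp d n (g1, g) = 0"
    then have zero: "Poly_Mapping.lookup (qexp d n (g1, g)) i = 0" for i by simp
    have "g s j = 0" if "s \<in> {2..d}" "j \<in> {2..n}" for s j
    proof -
      have "g s j \<le> (\<Sum>j\<in>{2..n}. g s j)" using that by (intro member_le_sum) auto
      also have "\<dots> = 0" using zero[of s] that by (simp add: lookup_qexp)
      finally show ?thesis by simp
    qed
    moreover have "g1 = 0" using zero[of 1] by (simp add: lookup_qexp)
    ultimately show False using that assms by (simp add: mem_Gset_iff qweight_def)
  qed
  then have empty: "{\<gamma> \<in> Gset d n m. qexp d n \<gamma> = 0} = {}" by fastforce
  show ?thesis unfolding qstar_def empty by simp
qed

lemma length_Lseq [simp]: "length (Lseq a d k) = Suc k"
  by (induction k) auto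

lemma nth_Lseq: "i \<le> k \<Longrightarrow> Lseq a d k ! i = Lpoly a d i"
  by (induction k) (auto simp: Lpoly_def nth_append le_Suc_eq)

lemma Lpoly_0: "Lpoly a d 0 = pconst 1"
  by (simp add: Lpoly_def)

lemma Lpoly_1: "Lpoly a d 1 = pvar 1"
  by (simp add: Lpoly_def)

lemma Lpoly_Suc: "1 \<le> k \<Longrightarrow> Lpoly a d (Suc k) = Lstep a d (Suc k) (Lseq a d k)"
  by (simp add: Lpoly_def nth_append)

lemma poly_mapping_least_var_cases:
  fixes \<beta> :: "nat \<Rightarrow>\<^sub>0 nat"
  obtains (outside) i where "0 < Poly_Mapping.lookup \<beta> i" "i \<notin> {1..d}"
    | (zero) "\<beta> = 0"
    | (least) j0 where "j0 \<in> {1..d}" "0 < Poly_Mapping.lookup \<beta> j0"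
        "\<And>i. i < j0 \<Longrightarrow> Poly_Mapping.lookup \<beta> i = 0"
proof (cases "\<beta> = 0")
  case False
  then obtain i where "0 < Poly_Mapping.lookup \<beta> i"
    by (metis lookup_zero neq0_conv poly_mapping_eqI)
  define j0 where "j0 = (LEAST i. 0 < Poly_Mapping.lookup \<beta> i)"
  have "0 < Poly_Mapping.lookup \<beta> j0"
    unfolding j0_def by (rule LeastI) fact
  moreover have "Poly_Mapping.lookup \<beta> i' = 0" if "i' < j0" for i'
    using not_less_Least[OF that[unfolded j0_def]] by simp
  ultimately show ?thesis using that by (cases "j0 \<in> {1..d}") blast+
qed

lemma Mpoly_eq_qstar:
  fixes a :: "nat \<Rightarrow> nat \<Rightarrow> 'a::field"
  assumes "2 \<le> m" and "\<And>i. i < m \<Longrightarrow> Ls ! i = qstar a d n i"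
  shows "Mpoly a m j Ls = (if j = 1 then qstar a d n (m - 1)
                           else (\<lambda>\<alpha>. \<Sum>t\<in>{2..m-1}. a t j * qstar a d n (m - t) \<alpha>))"
  using assms by (auto simp: Mpoly_def intro!: sum.cong)

lemma Lstep_at_least_var:
  assumes least: "j0 \<in> {1..d}" "0 < Poly_Mapping.lookup \<beta> j0"
    "\<And>i. i < j0 \<Longrightarrow> Poly_Mapping.lookup \<beta> i = 0"
  shows "Lstep a d m Ls \<beta> = Mpoly a m j0 Ls (\<beta> - Poly_Mapping.single j0 1)
            / of_nat (Poly_Mapping.lookup \<beta> j0) + (if j0 = 1 then 0 else a m j0 * pvar j0 \<beta>)"
  using sum_Psi_restr_least_var[OF least, of "\<lambda>j. Mpoly a m j Ls"]
    sum_pvar_at[OF finite_atLeastAtMost least(2), of "a m" 2 d] least(1)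
  by (auto simp: Lstep_def)

lemma Lstep_eq_qstar:
  fixes a :: "nat \<Rightarrow> nat \<Rightarrow> 'a::field_char_0"
  assumes d: "2 \<le> d" and m: "2 \<le> m" "m \<le> n"
    and Ls: "\<And>i. i < m \<Longrightarrow> Ls ! i = qstar a d n i"
  shows "Lstep a d m Ls \<beta> = qstar a d n m \<beta>"
proof -
  let ?Q = "qstar a d n" and ?e = "\<lambda>j. Poly_Mapping.single j (1::nat)"
  note M = Mpoly_eq_qstar[OF m(1) Ls]
  show ?thesis
  proof (cases \<beta> rule: poly_mapping_least_var_cases[of _ d])
    case (outside i)
    have "?Q k (\<beta> - ?e j) = 0" if "j \<in> {1..d}" for j k
      using outside that d by (intro qstar_eq_0_outside_vars[of _ i]) (auto simp: lookup_minus_single)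
    moreover have "pvar j \<beta> = (0::'a)" if "j \<in> {2..d}" for j
      using outside that by (auto simp: pvar_def lookup_single)
    ultimately show ?thesis
      using outside d by (simp add: Lstep_def M Psi_restr_eq_0 qstar_eq_0_outside_vars)
  next
    case zero
    have "pvar j 0 = (0::'a)" for j
      by (auto simp: pvar_def dest: arg_cong[of _ _ "\<lambda>p. Poly_Mapping.lookup p j"])
    then show ?thesis using zero m by (simp add: Lstep_def Psi_def qstar_at_0)
  next
    case (least j0)
    let ?b = "of_nat (Poly_Mapping.lookup \<beta> j0) :: 'a" and ?P = "pvar j0 \<beta> :: 'a"
    consider "j0 = 1" | "j0 \<in> {2..d}" using least by fastforce
    then show ?thesis
    proof cases
      case 1
      have "Lstep a d m Ls \<beta> = ?Q (m - 1) (\<beta> - ?e 1) / ?b"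
        using Lstep_at_least_var[OF least, of a m Ls] 1 by (simp add: M)
      also have "\<dots> = ?Q m \<beta>"
        using qstar_partial_first[of m \<beta> a d n] least 1 m by (simp add: field_simps)
      finally show ?thesis .
    next
      case 2
      let ?X = "\<Sum>t\<in>{2..m-1}. a t j0 * ?Q (m - t) (\<beta> - ?e j0)"
      have "Lstep a d m Ls \<beta> = ?X / ?b + a m j0 * ?P"
        using Lstep_at_least_var[OF least, of a m Ls] 2 by (simp add: M)
      also have "\<dots> = (?X + a m j0 * ?P) / ?b"
      proof -
        text \<open>The linear term only survives at \<open>\<beta> = e\<^sub>j\<^sub>0\<close>, where the divisor is \<open>1\<close>.\<close>
        have "?P \<noteq> 0 \<Longrightarrow> ?b = 1" by (simp add: pvar_def split: if_splits)
        then show ?thesis using least by (cases "?P = 0") (auto simp: add_divide_distrib)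
      qed
      also have "?X + a m j0 * ?P = (\<Sum>t\<in>{2..m}. a t j0 * ?Q (m - t) (\<beta> - ?e j0))"
      proof -
        have "{2..m} = insert m {2..m-1}" using m by auto
        then show ?thesis
          using m pconst_one_minus_single[where 'a = 'a, OF least(2)] by (simp add: qstar_0)
      qed
      also have "\<dots> = ?b * ?Q m \<beta>"
        using qstar_partial[OF 2 least(2) m(2), of a] by simp
      finally show ?thesis using least by simp
    qed
  qed
qed

theorem proposition4:
  fixes a :: "nat \<Rightarrow> nat \<Rightarrow> 'a::field_char_0" and d n m :: nat
  assumes "d \<ge> 2" and "m \<le> n"
  shows "qstar a d n m = Lpoly a d m"
  using assms(2)
proof (induction m rule: less_induct)
  case (less m)
  consider "m = 0" | "m = 1" | k where "m = Suc k" "1 \<le> k"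
    by (metis One_nat_def Suc_leI neq0_conv not0_implies_Suc)
  then show ?case
  proof cases
    case 2
    then show ?thesis by (simp only: qstar_1 Lpoly_1)
  next
    case 3
    have "Lseq a d k ! i = qstar a d n i" if "i < m" for i
      using that 3 less by (simp add: nth_Lseq)
    then show ?thesis
      using 3 less.prems assms(1) by (simp add: Lpoly_Suc Lstep_eq_qstar fun_eq_iff)
  qed (simp add: qstar_0 Lpoly_0)
qed

end
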